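(* Let $N \ge 1$ be the sample size, $K$ the data dimension and $J$ an integer with $1 \le J < K$. Let $\delta_1 > \delta_2 > \cdots > \delta_K > 0$ be the eigenvalues of the sample variance-covariance matrix ${\bf S}_x = \frac{1}{N}\sum_{i=1}^N {\bf x}_i {\bf x}_i^\prime$ of (mean-centred) data ${\bf x}_1,\ldots,{\bf x}_N \in \mathbb{R}^K$, and let $$\hat{\tau}_{\rm ML} = \frac{1}{K-J}\sum_{j=J+1}^K \delta_j .$$ For $\tau = \sigma^2$ with $0 < \tau < \delta_J$, consider the concentrated codelength $$\mathcal{I}(\tau) = \frac{N(K-J) - KJ}{2}\log \tau + \frac{N}{2\tau}\sum_{j=1}^K \delta_j - \frac{N}{2\tau}\sum_{j=1}^J (\delta_j - \tau) + \frac{K-J+1}{2}\sum_{j=1}^J \log(\delta_j - \tau).$$ Then $\mathcal{I}$ has $(J+1)$ stationary points whose locations are the roots of the degree $n = J+1$ polynomial $$a_n \tau^n + a_{n-1}\tau^{n-1} + \cdots + a_1 \tau + a_0, \qquad (0 < \tau < \delta_J),$$ with coefficients $$a_0 = -\hat{\tau}_{\rm ML}\, e_J,$$ $$a_j = (-1)^{j+1}\left[\hat{\tau}_{\rm ML}\, e_{J-j} + \left(1 - \frac{(j-1)(J-1)}{N(K-J)} - \frac{K(J-j+1)}{N(K-J)}\right) e_{J-j+1}\right], \quad (1 \le j \le J),$$ $$a_n = (-1)^J\left[1 - \frac{J(J-1)}{N(K-J)}\right],$$ where $e_t = e_t(\delta_1,\ldots,\delta_J)$ denotes the $t$-th elementary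 symmetric polynomial in the $J$ variables $\delta_1,\ldots,\delta_J$ (with $e_0 = 1$). The MML estimate $\hat{\sigma}^2_{\rm MML}$ of the residual variance is the stationary point in the domain $0 < \tau < \delta_J$ that yields the smallest value of $\mathcal{I}$, and the MML estimates of the factor lengths are $\hat{\alpha}_j = (\delta_j - \hat{\sigma}^2_{\rm MML})^{1/2}$ for $j = 1,\ldots,J$.
   Context: Setting: the probabilistic PCA model ${\bf x}_i \sim N_K({\bf 0}, {\bf A}{\bf A}^\prime + \sigma^2 {\bf I}_K)$, $i=1,\ldots,N$, with factor load matrix ${\bf A} \in \mathbb{R}^{K\times J}$ having mutually orthogonal columns of lengths $\alpha_1,\ldots,\alpha_J$ and residual variance $\sigma^2>0$. The function $\mathcal{I}(\tau)$ above is the minimum message length (MML87) codelength of this model, up to additive constants, after the factor orientations have been set to the top $J$ eigenvectors of ${\bf S}_x$ and the factor lengths to $\alpha_j^2 = \delta_j - \sigma^2$; it is a function of $\tau=\sigma^2$ only. $\hat{\tau}_{\rm ML}$ is the maximum likelihood estimate of the residual variance. The paper assumes throughout that the eigenvalues of ${\bf S}_x$ are distinct and positive, ordered $\delta_1 > \cdots > \delta_K > 0$. *)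

theory Defs
  imports "HOL-Analysis.Analysis"
begin

text \<open>Eigenvalues are given as a function delta :: nat => real, indexed 1..K.\<close>

definition esym :: "(nat \<Rightarrow> real) \<Rightarrow> nat \<Rightarrow> nat \<Rightarrow> real" where
  "esym \<delta> J t = (\<Sum>S\<in>{S. S \<subseteq> {1..J} \<and> card S = t}. \<Prod>i\<in>S. \<delta> i)"

definition tau_ML :: "nat \<Rightarrow> nat \<Rightarrow> (nat \<Rightarrow> real) \<Rightarrow> real" where
  "tau_ML K J \<delta> = (1 / (real K - real J)) * (\<Sum>j=J+1..K. \<delta> j)"

definition codelen :: "nat \<Rightarrow> nat \<Rightarrow> nat \<Rightarrow> (nat \<Rightarrow> real) \<Rightarrow> real \<Rightarrow> real" where
  "codelen N K J \<delta> \<tau> =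
     (real N * (real K - real J) - real K * real J) / 2 * ln \<tau>
     + real N / (2 * \<tau>) * (\<Sum>j=1..K. \<delta> j)
     - real N / (2 * \<tau>) * (\<Sum>j=1..J. (\<delta> j - \<tau>))
     + (real K - real J + 1) / 2 * (\<Sum>j=1..J. ln (\<delta> j - \<tau>))"

definition coef :: "nat \<Rightarrow> nat \<Rightarrow> nat \<Rightarrow> (nat \<Rightarrow> real) \<Rightarrow> nat \<Rightarrow> real" where
  "coef N K J \<delta> j =
     (if j = 0 then - tau_ML K J \<delta> * esym \<delta> J J
      else if j \<le> J then
        (-1) ^ (j + 1) *
          (tau_ML K J \<delta> * esym \<delta> J (J - j)
           + (1 - (real j - 1) * (real J - 1) / (real N * (real K - real J))
                - real K * (real J - real j + 1) / (real N * (real K - real J)))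
             * esym \<delta> J (J - j + 1))
      else if j = J + 1 then
        (-1) ^ J * (1 - real J * (real J - 1) / (real N * (real K - real J)))
      else 0)"

definition statpoly :: "nat \<Rightarrow> nat \<Rightarrow> nat \<Rightarrow> (nat \<Rightarrow> real) \<Rightarrow> real \<Rightarrow> real" where
  "statpoly N K J \<delta> \<tau> = (\<Sum>j=0..J+1. coef N K J \<delta> j * \<tau> ^ j)"

end

theory Submission
  imports Defs
begin

text \<open>On \<open>0 < \<tau> < \<delta>_J\<close> the logarithms of \<open>\<delta>_j - \<tau>\<close> combine into \<open>ln P(\<tau>)\<close>, where
  \<open>P(\<tau>) = \<Prod>_{j \<le> J} (\<delta>_j - \<tau>) > 0\<close>. Hence, with \<open>M = N(K - J)\<close> and \<open>c = M - KJ\<close>,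
  \<open>2 I'(\<tau>) = c/\<tau> - M \<tau>_ML/\<tau>^2 + (K - J + 1) P'(\<tau>)/P(\<tau>)\<close>.
  Multiplying by the positive factor \<open>\<tau>^2 P(\<tau>)/M\<close> leaves the polynomial
  \<open>(c \<tau> P + (K - J + 1) \<tau>^2 P')/M - \<tau>_ML P\<close> of degree \<open>J + 1\<close>; expanding \<open>P\<close> by Vieta's
  formula \<open>P(\<tau>) = \<Sum>_k (-1)^k e_{J-k} \<tau>^k\<close> and comparing coefficients gives exactly
  \<open>a_0, ..., a_{J+1}\<close>.\<close>

lemma esym_0: "esym \<delta> J 0 = 1"
proof -
  have "{S. S \<subseteq> {1..J} \<and> card S = 0} = {{}}"
    using finite_subset[of _ "{1..J}"] by fastforce
  then show ?thesis
    unfolding esym_def by simp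
qed

lemma prod_diff_eq_esym_sum:
  "(\<Prod>j=1..J. \<delta> j - x) = (\<Sum>k=0..J. (-1)^k * esym \<delta> J (J - k) * x^k)"
proof -
  let ?A = "{1..J}"
  have card_Pow: "card ` Pow ?A \<subseteq> {0..J}"
    using card_mono[of ?A] by fastforce
  have "(\<Prod>j\<in>?A. \<delta> j - x) = (\<Prod>j\<in>?A. \<delta> j + (-x))"
    by simp
  also have "\<dots> = (\<Sum>S\<in>Pow ?A. (\<Prod>j\<in>S. \<delta> j) * (\<Prod>j\<in>?A - S. -x))"
    by (rule prod_add) simp
  also have "\<dots> = (\<Sum>S\<in>Pow ?A. (\<Prod>j\<in>S. \<delta> j) * (-x)^(J - card S))"
    by (intro sum.cong refl) (auto simp: card_Diff_subset finite_subset)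
  also have "\<dots> = (\<Sum>t=0..J. \<Sum>S\<in>{S \<in> Pow ?A. card S = t}. (\<Prod>j\<in>S. \<delta> j) * (-x)^(J - card S))"
    by (rule sum.group[OF _ _ card_Pow, symmetric]) simp_all
  also have "\<dots> = (\<Sum>t=0..J. esym \<delta> J t * (-x)^(J - t))"
    unfolding esym_def Pow_def by (simp add: sum_distrib_right)
  also have "\<dots> = (\<Sum>k=0..J. esym \<delta> J (J - k) * (-x)^(J - (J - k)))"
    by (rule sum.atLeastAtMost_rev[of _ 0 J, simplified])
  also have "\<dots> = (\<Sum>k=0..J. (-1)^k * esym \<delta> J (J - k) * x^k)"
    by (intro sum.cong refl) (simp add: power_minus[of x])
  finally show ?thesis .
qed

lemma prod_diff_has_real_derivative:
  "((\<lambda>x. \<Prod>j=1..J. \<delta> j - x) has_real_derivative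
     (\<Sum>k=0..J. (-1)^k * esym \<delta> J (J - k) * (real k * x^(k - 1)))) (at x)"
  unfolding prod_diff_eq_esym_sum by (intro DERIV_sum DERIV_cmult) (auto intro!: derivative_eq_intros)

lemma sum_power_shift_diff:
  fixes a b :: "nat \<Rightarrow> 'a::comm_ring_1"
  shows "(\<Sum>k=0..n. b k * x^(k + 1) - a k * x^k) =
    (\<Sum>j=0..n+1. ((if j = 0 then 0 else b (j - 1)) - (if j \<le> n then a j else 0)) * x^j)"
proof -
  have "(\<Sum>k=0..n. b k * x^(k + 1)) = (\<Sum>j=0..n+1. (if j = 0 then 0 else b (j - 1)) * x^j)"
    by (simp add: sum.atLeast0_atMost_Suc_shift del: sum.cl_ivl_Suc)
  moreover have "(\<Sum>k=0..n. a k * x^k) = (\<Sum>j=0..n+1. (if j \<le> n then a j else 0) * x^j)"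
    by simp
  ultimately show ?thesis
    by (simp add: sum_subtractf left_diff_distrib)
qed

lemma statpoly_eq_sum:
  "statpoly N K J \<delta> x =
    (\<Sum>k=0..J. (-1)^k * esym \<delta> J (J - k) *
       (1 - (real K * real J - (real K - real J + 1) * real k) / (real N * (real K - real J))) * x^(k + 1)
     - tau_ML K J \<delta> * ((-1)^k * esym \<delta> J (J - k)) * x^k)"
proof -
  have "coef N K J \<delta> j =
      (if j = 0 then 0 else (-1)^(j - 1) * esym \<delta> J (J - (j - 1)) *
         (1 - (real K * real J - (real K - real J + 1) * real (j - 1)) / (real N * (real K - real J))))
      - (if j \<le> J then tau_ML K J \<delta> * ((-1)^j * esym \<delta> J (J - j)) else 0)"
    if "j \<le> J + 1" for j
  proof -
    have weight: "real m * (real J - 1) + real K * (real J - real m) =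
        real K * real J - (real K - real J + 1) * real m" for m
      by (simp add: algebra_simps)
    consider "j = 0" | m where "j = Suc m" "m < J" | "j = J + 1"
      using \<open>j \<le> J + 1\<close> by (cases j) fastforce+
    then show ?thesis
      by cases (simp_all add: coef_def esym_0 weight Suc_diff_Suc diff_divide_distrib
          add_divide_distrib algebra_simps)
  qed
  then show ?thesis
    unfolding statpoly_def sum_power_shift_diff by (intro sum.cong refl) simp
qed

lemma statpoly_eq:
  assumes "real N * (real K - real J) \<noteq> 0"
  shows "statpoly N K J \<delta> x =
    ((real N * (real K - real J) - real K * real J) * x * (\<Prod>j=1..J. \<delta> j - x)
     + (real K - real J + 1) * x^2 * (\<Sum>k=0..J. (-1)^k * esym \<delta> J (J - k) * (real k * x^(k - 1))))
    / (real N * (real K - real J))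
    - tau_ML K J \<delta> * (\<Prod>j=1..J. \<delta> j - x)"
proof -
  define M where "M = real N * (real K - real J)"
  define a where "a k = (-1)^k * esym \<delta> J (J - k)" for k
  have "((M - real K * real J) * x * (\<Sum>k=0..J. a k * x^k)
        + (real K - real J + 1) * x^2 * (\<Sum>k=0..J. a k * (real k * x^(k - 1)))) / M
      - tau_ML K J \<delta> * (\<Sum>k=0..J. a k * x^k)
    = (\<Sum>k=0..J. ((M - real K * real J) * x * (a k * x^k)
        + (real K - real J + 1) * x^2 * (a k * (real k * x^(k - 1)))) / M
      - tau_ML K J \<delta> * (a k * x^k))"
    by (simp add: sum_distrib_left sum.distrib sum_divide_distrib add_divide_distrib sum_subtractf)
  also have "\<dots> = statpoly N K J \<delta> x"
    unfolding statpoly_eq_sum M_def[symmetric] a_def[symmetric]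
  proof (intro sum.cong refl)
    fix k
    from assms show "((M - real K * real J) * x * (a k * x^k)
        + (real K - real J + 1) * x^2 * (a k * (real k * x^(k - 1)))) / M
      - tau_ML K J \<delta> * (a k * x^k)
      = a k * (1 - (real K * real J - (real K - real J + 1) * real k) / M) * x^(k + 1)
        - tau_ML K J \<delta> * a k * x^k"
      unfolding M_def[symmetric] by (cases k) (simp_all add: field_simps power2_eq_square)
  qed
  finally show ?thesis
    unfolding prod_diff_eq_esym_sum M_def a_def by (rule sym)
qed

lemma codelen_eq:
  assumes "J \<le> K" and "0 < y" and "\<forall>j\<in>{1..J}. y < \<delta> j"
  shows "codelen N K J \<delta> y =
    (real N * (real K - real J) - real K * real J) / 2 * ln y
    + real N * (real K - real J) * tau_ML K J \<delta> / (2 * y) + real N * real J / 2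
    + (real K - real J + 1) / 2 * ln (\<Prod>j=1..J. \<delta> j - y)"
proof -
  have "(\<Sum>j=J+1..K. \<delta> j) = (real K - real J) * tau_ML K J \<delta>"
    by (cases "K = J") (simp_all add: tau_ML_def)
  then have sum_split: "(\<Sum>j=1..K. \<delta> j) = (\<Sum>j=1..J. \<delta> j) + (real K - real J) * tau_ML K J \<delta>"
    using sum.ub_add_nat[of 1 J \<delta> "K - J"] assms(1) by simp
  have ln_prod_diff: "ln (\<Prod>j=1..J. \<delta> j - y) = (\<Sum>j=1..J. ln (\<delta> j - y))"
    using assms(3) by (intro ln_prod) auto
  show ?thesis
    unfolding codelen_def sum_split ln_prod_diff using assms(2) by (simp add: sum_subtractf field_simps)
qed

lemma codelen_has_real_derivative:
  assumes "N \<ge> 1" and "J < K" and "0 < \<tau>" and "\<forall>j\<in>{1..J}. \<tau> < \<delta> j"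
  shows "(codelen N K J \<delta> has_real_derivative
    real N * (real K - real J) / (2 * \<tau>^2 * (\<Prod>j=1..J. \<delta> j - \<tau>)) * statpoly N K J \<delta> \<tau>) (at \<tau>)"
proof -
  define M where "M = real N * (real K - real J)"
  define t where "t = tau_ML K J \<delta>"
  define P where "P y = (\<Prod>j=1..J. \<delta> j - y)" for y
  define P' where "P' = (\<Sum>k=0..J. (-1)^k * esym \<delta> J (J - k) * (real k * \<tau>^(k - 1)))"
  define g where "g y = (M - real K * real J) / 2 * ln y + M * t / (2 * y) + real N * real J / 2
      + (real K - real J + 1) / 2 * ln (P y)" for y
  have "M > 0" and "P \<tau> > 0"
    using assms by (auto simp: M_def P_def intro!: prod_pos)
  have "\<forall>\<^sub>F y in nhds \<tau>. 0 < y \<and> (\<forall>j\<in>{1..J}. y < \<delta> j)"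
    using assms(3,4)
    by (intro eventually_conj eventually_ball_finite ballI order_tendstoD[OF filterlim_ident]) auto
  then have near: "\<forall>\<^sub>F y in nhds \<tau>. codelen N K J \<delta> y = g y"
    by (rule eventually_mono) (use assms(2) codelen_eq in \<open>simp add: g_def M_def t_def P_def\<close>)
  have statpoly: "statpoly N K J \<delta> \<tau> =
      ((M - real K * real J) * \<tau> * P \<tau> + (real K - real J + 1) * \<tau>^2 * P') / M - t * P \<tau>"
    using statpoly_eq[of N K J \<delta> \<tau>] assms(1,2) unfolding M_def P_def P'_def t_def by simp
  have "(g has_real_derivative
      (M - real K * real J) / (2 * \<tau>) - M * t / (2 * \<tau>^2) + (real K - real J + 1) / 2 * (P' / P \<tau>)) (at \<tau>)"
    unfolding g_def[abs_def]
    using \<open>0 < \<tau>\<close> \<open>P \<tau> > 0\<close> prod_diff_has_real_derivative[of \<delta> J \<tau>, folded P_def P'_def]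
    by (auto intro!: derivative_eq_intros simp: field_simps power2_eq_square)
  also have "(M - real K * real J) / (2 * \<tau>) - M * t / (2 * \<tau>^2) + (real K - real J + 1) / 2 * (P' / P \<tau>)
      = M / (2 * \<tau>^2 * P \<tau>) * statpoly N K J \<delta> \<tau>"
    unfolding statpoly using \<open>M > 0\<close> \<open>0 < \<tau>\<close> \<open>P \<tau> > 0\<close> by (simp add: field_simps power2_eq_square)
  finally show ?thesis
    unfolding DERIV_cong_ev[OF refl near refl] M_def P_def .
qed

theorem theorem1:
  fixes N K J :: nat and \<delta> :: "nat \<Rightarrow> real"
  assumes "N \<ge> 1" and "1 \<le> J" and "J < K"
    and "\<And>i j. 1 \<le> i \<Longrightarrow> i < j \<Longrightarrow> j \<le> K \<Longrightarrow> \<delta> i > \<delta> j"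
    and "\<delta> K > 0"
  shows "\<forall>\<tau>. 0 < \<tau> \<and> \<tau> < \<delta> J \<longrightarrow>
           codelen N K J \<delta> differentiable (at \<tau>) \<and>
           (deriv (codelen N K J \<delta>) \<tau> = 0 \<longleftrightarrow> statpoly N K J \<delta> \<tau> = 0)"
proof (intro allI impI)
  \<comment> \<open>Only \<open>N(K - J) > 0\<close> and \<open>\<delta>_J < \<delta>_j\<close> for \<open>j < J\<close> are used.\<close>
  fix \<tau> :: real
  assume \<tau>: "0 < \<tau> \<and> \<tau> < \<delta> J"
  have below: "\<forall>j\<in>{1..J}. \<tau> < \<delta> j"
  proof
    fix j
    assume "j \<in> {1..J}"
    then show "\<tau> < \<delta> j"
      using \<tau> assms(3) assms(4)[of j J] by (cases "j = J") auto
  qed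
  define c where "c = real N * (real K - real J) / (2 * \<tau>^2 * (\<Prod>j=1..J. \<delta> j - \<tau>))"
  have "c \<noteq> 0"
    using assms(1,3) \<tau> below by (auto simp: c_def intro!: prod_pos)
  have "(codelen N K J \<delta> has_real_derivative c * statpoly N K J \<delta> \<tau>) (at \<tau>)"
    unfolding c_def using assms(1,3) \<tau> below by (intro codelen_has_real_derivative) auto
  with \<open>c \<noteq> 0\<close> show "codelen N K J \<delta> differentiable (at \<tau>) \<and>
      (deriv (codelen N K J \<delta>) \<tau> = 0 \<longleftrightarrow> statpoly N K J \<delta> \<tau> = 0)"
    by (auto simp: real_differentiable_def DERIV_imp_deriv)
qed

end
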